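(* Let $k\ge1$, let $(A,t)$ be a $\mathcal{C}_k$-algebra and let $M\subseteq A$ be a proper cyclic deductive system. The following are equivalent: (1) $M$ is maximal; (2) for every $a\notin M$ there exists $m\in M$ with $\bigwedge_{j=1}^{k}t^j(\triangle a)\wedge m=0$; (3) for all $a,b\in A$, if $\bigwedge_{j=1}^{k}t^j(\triangle a)\vee b\in M$, then $a\in M$ or $b\in M$; (4) for every $a\notin M$, $\sim\triangle\bigwedge_{j=1}^{k}t^j(a)\in M$; (5) for all $a,b\notin M$, $a\rightharpoondown b\in M$ and $b\rightharpoondown a\in M$.
   Context: A modal pseudocomplemented De Morgan algebra ($mpM$-algebra) is an algebra $\langle A,\wedge,\vee,\sim,{}^\ast,0,1\rangle$ such that $\langle A,\wedge,\vee,\sim,0,1\rangle$ is a De Morgan algebra (bounded distributive lattice with $\sim\sim x=x$, $\sim(x\vee y)=\sim x\wedge\sim y$), $x^\ast$ is the pseudocomplement of $x$, and $x\vee\sim x\le x\vee x^\ast$. Put $\nabla x=\sim(\sim x\wedge x^\ast)$, $\triangle x=\sim\nabla\sim x$. A $\mathcal{C}_k$-algebra ($k\ge1$) is a pair $(A,t)$ with $A$ an $mpM$-algebra and $t$ an $mpM$-automorphism of $A$ with $t^k=\mathrm{id}$. The cyclic implication is $a\rightharpoondown b=\bigvee_{i=1}^{k}\nabla(\sim t^i(a))\vee b$. A cyclic deductive system is a set $D\subseteq A$ with $1\in D$ such that $x,\,x\rightharpoondown y\in D$ imply $y\in D$; it is maximal if it is maximal among proper cyclic deductive systems. *)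

theory Defs
  imports Main
begin

text \<open>An algebra of signature (meet, join, neg = De Morgan negation, pc = pseudocomplement, bot, top)
  whose universe is the whole type 'a.\<close>
record 'a mpm =
  meet :: "'a \<Rightarrow> 'a \<Rightarrow> 'a"
  join :: "'a \<Rightarrow> 'a \<Rightarrow> 'a"
  neg  :: "'a \<Rightarrow> 'a"
  pc   :: "'a \<Rightarrow> 'a"
  bot  :: 'a
  top  :: 'a

definition le :: "'a mpm \<Rightarrow> 'a \<Rightarrow> 'a \<Rightarrow> bool" where
  "le A x y \<longleftrightarrow> meet A x y = x"

definition bdl :: "'a mpm \<Rightarrow> bool" where
  "bdl A \<longleftrightarrow>
     (\<forall>x y z. meet A (meet A x y) z = meet A x (meet A y z)) \<and>
     (\<forall>x y z. join A (join A x y) z = join A x (join A y z)) \<and>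
     (\<forall>x y. meet A x y = meet A y x) \<and>
     (\<forall>x y. join A x y = join A y x) \<and>
     (\<forall>x y. meet A x (join A x y) = x) \<and>
     (\<forall>x y. join A x (meet A x y) = x) \<and>
     (\<forall>x y z. meet A x (join A y z) = join A (meet A x y) (meet A x z)) \<and>
     (\<forall>x. join A x (bot A) = x) \<and>
     (\<forall>x. meet A x (top A) = x)"

definition de_morgan :: "'a mpm \<Rightarrow> bool" where
  "de_morgan A \<longleftrightarrow> bdl A \<and>
     (\<forall>x. neg A (neg A x) = x) \<and>
     (\<forall>x y. neg A (join A x y) = meet A (neg A x) (neg A y))"

definition mpM_algebra :: "'a mpm \<Rightarrow> bool" where
  "mpM_algebra A \<longleftrightarrow> de_morgan A \<and>
     (\<forall>x y. meet A y x = bot A \<longleftrightarrow> le A y (pc A x)) \<and>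
     (\<forall>x. le A (join A x (neg A x)) (join A x (pc A x)))"

definition nabla :: "'a mpm \<Rightarrow> 'a \<Rightarrow> 'a" where
  "nabla A x = neg A (meet A (neg A x) (pc A x))"

definition triangle :: "'a mpm \<Rightarrow> 'a \<Rightarrow> 'a" where
  "triangle A x = neg A (nabla A (neg A x))"

definition mpM_automorphism :: "'a mpm \<Rightarrow> ('a \<Rightarrow> 'a) \<Rightarrow> bool" where
  "mpM_automorphism A t \<longleftrightarrow> bij t \<and>
     (\<forall>x y. t (meet A x y) = meet A (t x) (t y)) \<and>
     (\<forall>x y. t (join A x y) = join A (t x) (t y)) \<and>
     (\<forall>x. t (neg A x) = neg A (t x)) \<and>
     (\<forall>x. t (pc A x) = pc A (t x)) \<and>
     t (bot A) = bot A \<and> t (top A) = top A"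

definition Ck_algebra :: "'a mpm \<Rightarrow> ('a \<Rightarrow> 'a) \<Rightarrow> nat \<Rightarrow> bool" where
  "Ck_algebra A t k \<longleftrightarrow> mpM_algebra A \<and> mpM_automorphism A t \<and> t ^^ k = id"

text \<open>Finite joins/meets over indices 1..n.\<close>
fun bigjoin :: "'a mpm \<Rightarrow> (nat \<Rightarrow> 'a) \<Rightarrow> nat \<Rightarrow> 'a" where
  "bigjoin A f 0 = bot A"
| "bigjoin A f (Suc n) = join A (bigjoin A f n) (f (Suc n))"

fun bigmeet :: "'a mpm \<Rightarrow> (nat \<Rightarrow> 'a) \<Rightarrow> nat \<Rightarrow> 'a" where
  "bigmeet A f 0 = top A"
| "bigmeet A f (Suc n) = meet A (bigmeet A f n) (f (Suc n))"

definition cimp :: "'a mpm \<Rightarrow> ('a \<Rightarrow> 'a) \<Rightarrow> nat \<Rightarrow> 'a \<Rightarrow> 'a \<Rightarrow> 'a" where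
  "cimp A t k a b = join A (bigjoin A (\<lambda>i. nabla A (neg A ((t ^^ i) a))) k) b"

definition cyclic_ds :: "'a mpm \<Rightarrow> ('a \<Rightarrow> 'a) \<Rightarrow> nat \<Rightarrow> 'a set \<Rightarrow> bool" where
  "cyclic_ds A t k D \<longleftrightarrow> top A \<in> D \<and> (\<forall>x y. x \<in> D \<longrightarrow> cimp A t k x y \<in> D \<longrightarrow> y \<in> D)"

definition maximal_cyclic_ds :: "'a mpm \<Rightarrow> ('a \<Rightarrow> 'a) \<Rightarrow> nat \<Rightarrow> 'a set \<Rightarrow> bool" where
  "maximal_cyclic_ds A t k M \<longleftrightarrow> cyclic_ds A t k M \<and> M \<noteq> UNIV \<and>
     (\<forall>E. cyclic_ds A t k E \<and> E \<noteq> UNIV \<and> M \<subseteq> E \<longrightarrow> E = M)"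

end

theory Submission
  imports Defs
begin

text \<open>The key element is \<open>\<box>a = \<And>\<^sub>j t\<^sup>j(\<triangle>a)\<close>. It is Boolean (complemented by \<open>\<sim>\<box>a\<close>),
  below \<open>a\<close>, fixed by \<open>t\<close>, idempotent and meet preserving, and the cyclic implication is
  \<open>a \<rightharpoondown> b = \<sim>\<box>a \<or> b\<close>. Hence cyclic deductive systems are exactly the lattice filters closed
  under \<open>\<box>\<close>, and the one generated by \<open>M\<close> and \<open>a\<close> is \<open>{y. \<exists>m\<in>M. \<box>a \<and> \<box>m \<le> y}\<close>.
  Maximality of \<open>M\<close> thus says that this system is improper for every \<open>a \<notin> M\<close>, i.e. \<open>\<box>a\<close> is
  disjoint from some \<open>m \<in> M\<close>, equivalently \<open>\<sim>\<box>a \<in> M\<close>; the remaining conditions are the usual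
  reformulations for the complemented element \<open>\<box>a\<close>.\<close>

locale mpM =
  fixes A :: "'a mpm"
  assumes mpM: "mpM_algebra A"
begin

lemma bdl: "bdl A"
  using mpM unfolding mpM_algebra_def de_morgan_def by auto

lemma meet_assoc: "meet A (meet A x y) z = meet A x (meet A y z)"
  using bdl unfolding bdl_def by blast
lemma join_assoc: "join A (join A x y) z = join A x (join A y z)"
  using bdl unfolding bdl_def by blast
lemma meet_comm: "meet A x y = meet A y x"
  using bdl unfolding bdl_def by blast
lemma join_comm: "join A x y = join A y x"
  using bdl unfolding bdl_def by blast
lemma meet_join_absorb: "meet A x (join A x y) = x"
  using bdl unfolding bdl_def by blast
lemma join_meet_absorb: "join A x (meet A x y) = x"
  using bdl unfolding bdl_def by blast
lemma meet_join_distrib: "meet A x (join A y z) = join A (meet A x y) (meet A x z)"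
  using bdl unfolding bdl_def by blast
lemma join_bot: "join A x (bot A) = x"
  using bdl unfolding bdl_def by blast
lemma meet_top: "meet A x (top A) = x"
  using bdl unfolding bdl_def by blast

lemma meet_idem: "meet A x x = x"
  by (metis meet_join_absorb join_meet_absorb)
lemma join_idem: "join A x x = x"
  by (metis meet_join_absorb join_meet_absorb)

lemma le_iff_join: "le A x y \<longleftrightarrow> join A x y = y"
  unfolding le_def by (metis meet_join_absorb join_meet_absorb meet_comm join_comm)

lemma join_meet_distrib: "join A x (meet A y z) = meet A (join A x y) (join A x z)"
proof -
  have "meet A (join A x y) (join A x z)
      = join A (meet A (join A x y) x) (meet A (join A x y) z)"
    by (rule meet_join_distrib)
  also have "\<dots> = join A x (join A (meet A x z) (meet A y z))"
    by (metis meet_join_absorb meet_comm join_assoc meet_join_distrib)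
  also have "\<dots> = join A x (meet A y z)"
    by (metis join_meet_absorb join_assoc)
  finally show ?thesis by simp
qed

sublocale L: distrib_lattice "meet A" "le A" "\<lambda>x y. le A x y \<and> x \<noteq> y" "join A"
proof unfold_locales
  show "\<And>x y z. join A x (meet A y z) = meet A (join A x y) (join A x z)"
    by (rule join_meet_distrib)
qed (auto simp: le_def le_iff_join,
     (metis meet_assoc meet_comm meet_idem join_assoc join_comm join_idem
        meet_join_absorb join_meet_absorb)+)

lemma bot_le: "le A (bot A) x"
  unfolding le_iff_join by (metis join_bot join_comm)
lemma le_top: "le A x (top A)"
  unfolding le_def by (rule meet_top)
lemma le_bot_iff: "le A x (bot A) \<longleftrightarrow> x = bot A"
  using L.order.antisym bot_le by blast
lemma meet_bot: "meet A x (bot A) = bot A"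
  using bot_le unfolding le_def by (metis meet_comm)
lemma bot_meet: "meet A (bot A) x = bot A"
  by (metis meet_comm meet_bot)
lemma bot_join: "join A (bot A) x = x"
  by (metis join_comm join_bot)

lemma neg_neg: "neg A (neg A x) = x"
  using mpM unfolding mpM_algebra_def de_morgan_def by auto
lemma neg_join: "neg A (join A x y) = meet A (neg A x) (neg A y)"
  using mpM unfolding mpM_algebra_def de_morgan_def by auto
lemma neg_meet: "neg A (meet A x y) = join A (neg A x) (neg A y)"
  by (metis neg_neg neg_join)

lemma neg_antimono: "le A x y \<Longrightarrow> le A (neg A y) (neg A x)"
proof -
  assume "le A x y"
  then have "neg A y = meet A (neg A x) (neg A y)"
    unfolding le_iff_join by (metis neg_join)
  then show ?thesis
    unfolding le_def by (metis meet_comm)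
qed

lemma neg_bot: "neg A (bot A) = top A"
proof -
  have "le A (neg A (neg A (top A))) (neg A (bot A))"
    by (rule neg_antimono[OF bot_le])
  then show ?thesis
    using neg_neg L.order.antisym le_top by metis
qed
lemma neg_top: "neg A (top A) = bot A"
  by (metis neg_bot neg_neg)

lemma le_pc_iff: "le A y (pc A x) \<longleftrightarrow> meet A y x = bot A"
  using mpM unfolding mpM_algebra_def by auto
lemma join_neg_le_join_pc: "le A (join A x (neg A x)) (join A x (pc A x))"
  using mpM unfolding mpM_algebra_def by auto

lemma pc_meet_self: "meet A (pc A x) x = bot A"
  using le_pc_iff L.order_refl by blast
lemma meet_pc_self: "meet A x (pc A x) = bot A"
  by (metis meet_comm pc_meet_self)

lemma pc_join: "pc A (join A u v) = meet A (pc A u) (pc A v)"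
proof (rule L.order.antisym)
  have "meet A (pc A (join A u v)) (join A u v) = bot A"
    by (rule pc_meet_self)
  then have "meet A (pc A (join A u v)) u = bot A" "meet A (pc A (join A u v)) v = bot A"
    by (metis le_bot_iff L.inf_mono L.order_refl L.sup_ge1 L.sup_ge2)+
  then show "le A (pc A (join A u v)) (meet A (pc A u) (pc A v))"
    using le_pc_iff L.le_inf_iff by blast
  have "meet A u (meet A (pc A u) (pc A v)) = bot A"
    by (metis meet_assoc meet_pc_self bot_meet)
  moreover have "meet A v (meet A (pc A u) (pc A v)) = bot A"
    by (metis L.inf_left_commute meet_assoc meet_pc_self bot_meet)
  ultimately have "meet A (meet A (pc A u) (pc A v)) (join A u v) = bot A"
    unfolding L.inf_sup_distrib1 by (simp add: meet_comm join_bot)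
  then show "le A (meet A (pc A u) (pc A v)) (pc A (join A u v))"
    using le_pc_iff by blast
qed

lemma pc_bot: "pc A (bot A) = top A"
  by (metis L.order.antisym le_top meet_bot le_pc_iff)

lemma triangle_eq: "triangle A x = meet A x (pc A (neg A x))"
  unfolding triangle_def nabla_def neg_neg ..

lemma nabla_neg: "nabla A (neg A x) = neg A (triangle A x)"
  unfolding triangle_def by (simp add: neg_neg)

lemma triangle_le: "le A (triangle A x) x"
  unfolding triangle_eq by simp

lemma triangle_meet: "triangle A (meet A x y) = meet A (triangle A x) (triangle A y)"
  unfolding triangle_eq neg_meet pc_join by (simp add: L.inf_aci)

lemma triangle_top: "triangle A (top A) = top A"
  unfolding triangle_eq neg_top pc_bot meet_idem ..

definition boolean :: "'a \<Rightarrow> bool" where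
  "boolean b \<longleftrightarrow> meet A b (neg A b) = bot A"

lemma boolean_join_neg: "boolean b \<Longrightarrow> join A b (neg A b) = top A"
proof -
  assume "boolean b"
  then have "neg A (join A b (neg A b)) = bot A"
    unfolding boolean_def neg_join neg_neg by (simp add: L.inf_aci)
  then show ?thesis
    by (metis neg_neg neg_bot)
qed

lemma boolean_top: "boolean (top A)"
  unfolding boolean_def neg_top meet_bot ..

lemma boolean_meet: "boolean a \<Longrightarrow> boolean b \<Longrightarrow> boolean (meet A a b)"
  unfolding boolean_def neg_meet L.inf_sup_distrib1
  by (metis L.inf_left_commute meet_assoc meet_comm meet_bot join_bot)

text \<open>This is where the defining inequality \<open>x \<or> \<sim>x \<le> x \<or> x\<^sup>*\<close> of \<open>mpM\<close>-algebras enters.\<close>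
lemma boolean_triangle: "boolean (triangle A x)"
proof -
  define y where "y = neg A x"
  have x: "x = neg A y"
    using y_def neg_neg by simp
  have "le A (neg A (join A y (pc A y))) (neg A (join A y (neg A y)))"
    using neg_antimono[OF join_neg_le_join_pc[of y]] .
  then have neg_pc_le: "le A (meet A (neg A y) (neg A (pc A y))) y"
    unfolding neg_join neg_neg by (meson L.le_inf_iff)
  have disjoint_y: "meet A (meet A (neg A y) (pc A y)) y = bot A"
    by (metis L.inf_left_commute meet_comm meet_pc_self meet_bot meet_assoc)
  have "le A (meet A (meet A (neg A y) (pc A y)) (neg A (pc A y)))
             (meet A (pc A y) (meet A (neg A y) (neg A (pc A y))))"
    by (simp add: L.inf_aci)
  also have "le A \<dots> (meet A (pc A y) y)"
    using neg_pc_le L.inf_mono L.order_refl by blast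
  finally have disjoint_neg_pc: "meet A (meet A (neg A y) (pc A y)) (neg A (pc A y)) = bot A"
    using pc_meet_self le_bot_iff by simp
  have "meet A (triangle A x) (neg A (triangle A x))
      = join A (meet A (meet A (neg A y) (pc A y)) y)
               (meet A (meet A (neg A y) (pc A y)) (neg A (pc A y)))"
    unfolding triangle_eq x by (simp add: neg_neg neg_meet L.inf_sup_distrib1)
  then show ?thesis
    unfolding boolean_def disjoint_y disjoint_neg_pc join_bot .
qed

lemma pc_neg_boolean: "boolean b \<Longrightarrow> pc A (neg A b) = b"
proof -
  assume b: "boolean b"
  then have b_le: "le A b (pc A (neg A b))"
    using le_pc_iff unfolding boolean_def by blast
  have "pc A (neg A b) = meet A (pc A (neg A b)) (join A b (neg A b))"
    using boolean_join_neg[OF b] meet_top by simp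
  also have "\<dots> = meet A (pc A (neg A b)) b"
    unfolding L.inf_sup_distrib1 pc_meet_self join_bot ..
  finally have "le A (pc A (neg A b)) b"
    by (metis L.inf.cobounded2)
  then show ?thesis
    using b_le L.order.antisym by blast
qed

lemma triangle_boolean: "boolean b \<Longrightarrow> triangle A b = b"
  unfolding triangle_eq using pc_neg_boolean meet_idem by simp

lemma boolean_le_imp_join_neg:
  assumes "boolean b" and "le A b y"
  shows "join A (neg A b) y = top A"
proof -
  have "le A (join A (neg A b) b) (join A (neg A b) y)"
    using assms(2) L.sup_mono L.order_refl by blast
  then show ?thesis
    using boolean_join_neg[OF assms(1)] join_comm le_top L.order.antisym by metis
qed

lemma bigmeet_meet: "meet A (bigmeet A f n) (bigmeet A g n) = bigmeet A (\<lambda>j. meet A (f j) (g j)) n"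
  by (induction n) (simp_all add: meet_idem L.inf_aci)

lemma triangle_bigmeet: "triangle A (bigmeet A f n) = bigmeet A (\<lambda>j. triangle A (f j)) n"
  by (induction n) (simp_all add: triangle_top triangle_meet)

lemma boolean_bigmeet: "(\<And>j. boolean (f j)) \<Longrightarrow> boolean (bigmeet A f n)"
  by (induction n) (simp_all add: boolean_top boolean_meet)

lemma bigjoin_neg: "bigjoin A (\<lambda>j. neg A (f j)) n = neg A (bigmeet A f n)"
  by (induction n) (simp_all add: neg_top neg_meet)

lemma bigmeet_Suc_shift: "bigmeet A f (Suc n) = meet A (f 1) (bigmeet A (\<lambda>j. f (Suc j)) n)"
  by (induction n) (simp_all add: meet_top L.inf_aci)

lemma bigmeet_const: "bigmeet A (\<lambda>j. b) (Suc n) = b"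
  by (induction n) (simp_all add: meet_top meet_comm meet_idem)

lemma bigmeet_top: "bigmeet A (\<lambda>j. top A) n = top A"
  by (induction n) (simp_all add: meet_top)

end

locale Ck = mpM +
  fixes t :: "'a \<Rightarrow> 'a" and k :: nat
  assumes Ck: "Ck_algebra A t k" and k_pos: "k \<ge> 1"
begin

lemma automorphism: "mpM_automorphism A t"
  using Ck unfolding Ck_algebra_def by blast

lemma funpow_k: "(t ^^ k) x = x"
  using Ck unfolding Ck_algebra_def by simp

lemma funpow_meet: "(t ^^ i) (meet A x y) = meet A ((t ^^ i) x) ((t ^^ i) y)"
  using automorphism unfolding mpM_automorphism_def by (induction i) auto
lemma funpow_neg: "(t ^^ i) (neg A x) = neg A ((t ^^ i) x)"
  using automorphism unfolding mpM_automorphism_def by (induction i) auto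
lemma funpow_pc: "(t ^^ i) (pc A x) = pc A ((t ^^ i) x)"
  using automorphism unfolding mpM_automorphism_def by (induction i) auto
lemma funpow_top: "(t ^^ i) (top A) = top A"
  using automorphism unfolding mpM_automorphism_def by (induction i) auto
lemma funpow_bot: "(t ^^ i) (bot A) = bot A"
  using automorphism unfolding mpM_automorphism_def by (induction i) auto

lemma funpow_triangle: "(t ^^ i) (triangle A x) = triangle A ((t ^^ i) x)"
  unfolding triangle_eq funpow_meet funpow_neg funpow_pc ..

lemma funpow_boolean: "boolean b \<Longrightarrow> boolean ((t ^^ i) b)"
  unfolding boolean_def by (metis funpow_meet funpow_neg funpow_bot)

lemma funpow_bigmeet: "(t ^^ i) (bigmeet A f n) = bigmeet A (\<lambda>j. (t ^^ i) (f j)) n"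
  by (induction n) (simp_all add: funpow_top funpow_meet)

definition box :: "'a \<Rightarrow> 'a" where
  "box x = bigmeet A (\<lambda>j. (t ^^ j) (triangle A x)) k"

lemma boolean_box: "boolean (box x)"
  unfolding box_def by (intro boolean_bigmeet funpow_boolean boolean_triangle)

lemma box_le: "le A (box x) x"
proof -
  obtain k' where k: "k = Suc k'"
    using k_pos by (cases k) auto
  have "box x = meet A (bigmeet A (\<lambda>j. (t ^^ j) (triangle A x)) k') ((t ^^ k) (triangle A x))"
    unfolding box_def by (simp only: k bigmeet.simps)
  then have "box x = meet A (bigmeet A (\<lambda>j. (t ^^ j) (triangle A x)) k') (triangle A x)"
    unfolding funpow_k .
  then have "le A (box x) (triangle A x)"
    by simp
  then show ?thesis
    using triangle_le L.order.trans by blast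
qed

lemma box_meet: "box (meet A x y) = meet A (box x) (box y)"
  unfolding box_def bigmeet_meet triangle_meet funpow_meet ..

lemma box_mono: "le A x y \<Longrightarrow> le A (box x) (box y)"
  unfolding le_def by (metis box_meet)

lemma box_top: "box (top A) = top A"
  unfolding box_def triangle_top funpow_top bigmeet_top ..

text \<open>Applying \<open>t\<close> shifts the indices \<open>1..k\<close> to \<open>2..k+1\<close>, and \<open>t\<^sup>k\<^sup>+\<^sup>1 = t\<close>.\<close>
lemma funpow_box: "(t ^^ i) (box x) = box x"
proof (induction i)
  case (Suc i)
  obtain k' where k: "k = Suc k'"
    using k_pos by (cases k) auto
  have "t (box x) = bigmeet A (\<lambda>j. (t ^^ Suc j) (triangle A x)) k"
    using funpow_bigmeet[of 1] unfolding box_def by (simp add: funpow_swap1)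
  also have "\<dots> = meet A (bigmeet A (\<lambda>j. (t ^^ Suc j) (triangle A x)) k')
                        ((t ^^ Suc k) (triangle A x))"
    unfolding k by (simp only: bigmeet.simps)
  also have "(t ^^ Suc k) (triangle A x) = (t ^^ 1) (triangle A x)"
    using funpow_k by (simp add: funpow_swap1)
  also have "meet A (bigmeet A (\<lambda>j. (t ^^ Suc j) (triangle A x)) k') ((t ^^ 1) (triangle A x))
           = box x"
    unfolding box_def by (simp only: k bigmeet_Suc_shift meet_comm)
  finally show ?case
    using Suc.IH by simp
qed simp

lemma box_box: "box (box x) = box x"
proof -
  obtain k' where "k = Suc k'"
    using k_pos by (cases k) auto
  then show ?thesis
    unfolding box_def[of "box x"] triangle_boolean[OF boolean_box] funpow_box
    using bigmeet_const by simp
qed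

lemma cimp_eq: "cimp A t k a b = join A (neg A (box a)) b"
  unfolding cimp_def box_def nabla_neg funpow_triangle[symmetric] bigjoin_neg ..

lemma triangle_bigmeet_funpow: "triangle A (bigmeet A (\<lambda>j. (t ^^ j) a) k) = box a"
  unfolding box_def triangle_bigmeet funpow_triangle ..

context
  fixes D :: "'a set"
  assumes ds: "cyclic_ds A t k D"
begin

lemma cyclic_ds_top: "top A \<in> D"
  using ds unfolding cyclic_ds_def by blast

lemma cyclic_ds_mp: "x \<in> D \<Longrightarrow> join A (neg A (box x)) y \<in> D \<Longrightarrow> y \<in> D"
  using ds unfolding cyclic_ds_def cimp_eq by blast

lemma cyclic_ds_mp_top: "x \<in> D \<Longrightarrow> join A (neg A (box x)) y = top A \<Longrightarrow> y \<in> D"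
  by (metis cyclic_ds_mp cyclic_ds_top)

lemma cyclic_ds_up:
  assumes x: "x \<in> D" and "le A x y"
  shows "y \<in> D"
proof -
  have "le A (box x) y"
    using L.order.trans[OF box_le \<open>le A x y\<close>] .
  then show ?thesis
    using cyclic_ds_mp_top[OF x] boolean_le_imp_join_neg[OF boolean_box] by blast
qed

lemma cyclic_ds_box: "x \<in> D \<Longrightarrow> box x \<in> D"
  using cyclic_ds_mp_top boolean_le_imp_join_neg[OF boolean_box L.order_refl] by blast

lemma cyclic_ds_meet:
  assumes x: "x \<in> D" and y: "y \<in> D"
  shows "meet A x y \<in> D"
proof -
  have "box x = meet A (box x) (join A (box y) (neg A (box y)))"
    using boolean_join_neg[OF boolean_box] meet_top by simp
  also have "\<dots> = join A (meet A (box x) (box y)) (meet A (box x) (neg A (box y)))"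
    by (rule meet_join_distrib)
  also have "le A \<dots> (join A (neg A (box y)) (meet A x y))"
  proof -
    have "le A (meet A (box x) (box y)) (meet A x y)"
      using box_le L.inf_mono by blast
    moreover have "le A (meet A (box x) (neg A (box y))) (neg A (box y))"
      by simp
    ultimately show ?thesis
      by (meson L.le_sup_iff L.sup_ge1 L.sup_ge2 L.order.trans)
  qed
  finally have "join A (neg A (box y)) (meet A x y) \<in> D"
    using cyclic_ds_mp_top[OF x] boolean_le_imp_join_neg[OF boolean_box] by blast
  then show ?thesis
    using cyclic_ds_mp[OF y] by blast
qed

end

definition extension :: "'a set \<Rightarrow> 'a \<Rightarrow> 'a set" where
  "extension M a = {y. \<exists>m\<in>M. le A (meet A (box a) (box m)) y}"

lemma cyclic_ds_extension:
  assumes M: "cyclic_ds A t k M"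
  shows "cyclic_ds A t k (extension M a)"
  unfolding cyclic_ds_def
proof (intro conjI allI impI)
  show "top A \<in> extension M a"
    unfolding extension_def using cyclic_ds_top[OF M] le_top by blast
  fix x y
  assume "x \<in> extension M a" "cimp A t k x y \<in> extension M a"
  then obtain m m' where m: "m \<in> M" "le A (meet A (box a) (box m)) x"
    and m': "m' \<in> M" "le A (meet A (box a) (box m')) (join A (neg A (box x)) y)"
    unfolding extension_def cimp_eq by blast
  have "le A (meet A (box a) (box m)) (box x)"
    using box_mono[OF m(2)] by (simp add: box_meet box_box)
  moreover have "meet A (box a) (box (meet A m m'))
               = meet A (meet A (box a) (box m)) (meet A (box a) (box m'))"
    by (simp add: box_meet L.inf_aci meet_idem)
  ultimately have "le A (meet A (box a) (box (meet A m m')))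
                        (meet A (box x) (join A (neg A (box x)) y))"
    using L.inf_mono[OF _ m'(2)] by simp
  also have "meet A (box x) (join A (neg A (box x)) y) = meet A (box x) y"
    using boolean_box[of x] unfolding boolean_def meet_join_distrib by (simp add: bot_join)
  also have "le A \<dots> y"
    by simp
  finally show "y \<in> extension M a"
    unfolding extension_def using cyclic_ds_meet[OF M m(1) m'(1)] by blast
qed

lemma subset_extension: "M \<subseteq> extension M a"
proof
  fix x
  assume "x \<in> M"
  moreover have "le A (meet A (box a) (box x)) x"
    using L.order.trans[OF L.inf.cobounded2 box_le] .
  ultimately show "x \<in> extension M a"
    unfolding extension_def by blast
qed

lemma mem_extension: "cyclic_ds A t k M \<Longrightarrow> a \<in> extension M a"
proof -
  assume M: "cyclic_ds A t k M"
  have "le A (meet A (box a) (box (top A))) a"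
    unfolding box_top meet_top by (rule box_le)
  then show ?thesis
    unfolding extension_def using cyclic_ds_top[OF M] by blast
qed

context
  fixes M :: "'a set"
  assumes M: "cyclic_ds A t k M" and proper: "M \<noteq> UNIV"
begin

lemma maximal_imp_box_disjoint:
  assumes "maximal_cyclic_ds A t k M" and "a \<notin> M"
  shows "\<exists>m\<in>M. meet A (box a) m = bot A"
proof -
  have "extension M a \<noteq> M"
    using mem_extension[OF M] assms(2) by blast
  then have "extension M a = UNIV"
    using assms(1) cyclic_ds_extension[OF M] subset_extension
    unfolding maximal_cyclic_ds_def by blast
  then obtain m where "m \<in> M" "le A (meet A (box a) (box m)) (bot A)"
    unfolding extension_def by blast
  then show ?thesis
    using cyclic_ds_box[OF M] le_bot_iff by blast
qed

lemma box_disjoint_imp_prime: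
  assumes disjoint: "\<forall>a. a \<notin> M \<longrightarrow> (\<exists>m\<in>M. meet A (box a) m = bot A)"
    and join_mem: "join A (box a) b \<in> M"
  shows "a \<in> M \<or> b \<in> M"
proof (cases "a \<in> M")
  case False
  then obtain m where m: "m \<in> M" "meet A (box a) m = bot A"
    using disjoint by blast
  have "m = meet A m (join A (box a) (neg A (box a)))"
    using boolean_join_neg[OF boolean_box] meet_top by simp
  also have "\<dots> = meet A m (neg A (box a))"
    using m(2) unfolding meet_join_distrib by (simp add: meet_comm bot_join)
  finally have "neg A (box a) \<in> M"
    using cyclic_ds_up[OF M m(1)] unfolding le_def by metis
  then have "meet A (join A (box a) b) (neg A (box a)) \<in> M"
    using cyclic_ds_meet[OF M join_mem] by blast
  also have "meet A (join A (box a) b) (neg A (box a)) = meet A b (neg A (box a))"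
    using boolean_box[of a] unfolding boolean_def by (simp add: L.inf_sup_distrib2 bot_join)
  finally show ?thesis
    using cyclic_ds_up[OF M] by (meson L.inf.cobounded1)
qed simp

lemma prime_imp_neg_box_mem:
  assumes "\<forall>a b. join A (box a) b \<in> M \<longrightarrow> a \<in> M \<or> b \<in> M" and "a \<notin> M"
  shows "neg A (box a) \<in> M"
proof -
  have "join A (box a) (neg A (box a)) \<in> M"
    using boolean_join_neg[OF boolean_box] cyclic_ds_top[OF M] by simp
  then show ?thesis
    using assms by blast
qed

lemma neg_box_mem_imp_cimp_mem:
  assumes "\<forall>a. a \<notin> M \<longrightarrow> neg A (box a) \<in> M" and "a \<notin> M"
  shows "cimp A t k a b \<in> M"
  unfolding cimp_eq using assms cyclic_ds_up[OF M] L.sup_ge1 by blast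

lemma cimp_mem_imp_maximal:
  assumes cimp_mem: "\<forall>a b. a \<notin> M \<and> b \<notin> M \<longrightarrow> cimp A t k a b \<in> M"
  shows "maximal_cyclic_ds A t k M"
  unfolding maximal_cyclic_ds_def
proof (intro conjI allI impI M proper)
  fix E
  assume E: "cyclic_ds A t k E \<and> E \<noteq> UNIV \<and> M \<subseteq> E"
  then obtain y where y: "y \<notin> E"
    by blast
  show "E = M"
  proof (rule ccontr)
    assume "E \<noteq> M"
    then obtain x where "x \<in> E" "x \<notin> M"
      using E by blast
    then have "y \<in> E"
      using cimp_mem y E unfolding cyclic_ds_def by blast
    then show False
      using y by blast
  qed
qed

end

end

theorem theorem4p3:
  fixes A :: "'a mpm" and t :: "'a \<Rightarrow> 'a" and k :: nat and M :: "'a set"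
  assumes "k \<ge> 1"
    and "Ck_algebra A t k"
    and "cyclic_ds A t k M"
    and "M \<noteq> UNIV"
  defines "P1 \<equiv> maximal_cyclic_ds A t k M"
    and "P2 \<equiv> (\<forall>a. a \<notin> M \<longrightarrow> (\<exists>m\<in>M.
                 meet A (bigmeet A (\<lambda>j. (t ^^ j) (triangle A a)) k) m = bot A))"
    and "P3 \<equiv> (\<forall>a b. join A (bigmeet A (\<lambda>j. (t ^^ j) (triangle A a)) k) b \<in> M
                 \<longrightarrow> a \<in> M \<or> b \<in> M)"
    and "P4 \<equiv> (\<forall>a. a \<notin> M \<longrightarrow> neg A (triangle A (bigmeet A (\<lambda>j. (t ^^ j) a) k)) \<in> M)"
    and "P5 \<equiv> (\<forall>a b. a \<notin> M \<and> b \<notin> M \<longrightarrow> cimp A t k a b \<in> M \<and> cimp A t k b a \<in> M)"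
  shows "(P1 \<longleftrightarrow> P2) \<and> (P2 \<longleftrightarrow> P3) \<and> (P3 \<longleftrightarrow> P4) \<and> (P4 \<longleftrightarrow> P5)"
proof -
  interpret Ck A t k
    using assms(1,2) unfolding Ck_def Ck_axioms_def mpM_def Ck_algebra_def by blast
  have P2: "P2 \<longleftrightarrow> (\<forall>a. a \<notin> M \<longrightarrow> (\<exists>m\<in>M. meet A (box a) m = bot A))"
    unfolding P2_def box_def ..
  have P3: "P3 \<longleftrightarrow> (\<forall>a b. join A (box a) b \<in> M \<longrightarrow> a \<in> M \<or> b \<in> M)"
    unfolding P3_def box_def ..
  have P4: "P4 \<longleftrightarrow> (\<forall>a. a \<notin> M \<longrightarrow> neg A (box a) \<in> M)"
    unfolding P4_def triangle_bigmeet_funpow ..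
  have "P1 \<Longrightarrow> P2"
    unfolding P1_def P2 using maximal_imp_box_disjoint[OF assms(3,4)] by blast
  moreover have "P2 \<Longrightarrow> P3"
    unfolding P2 P3 using box_disjoint_imp_prime[OF assms(3,4)] by blast
  moreover have "P3 \<Longrightarrow> P4"
    unfolding P3 P4 using prime_imp_neg_box_mem[OF assms(3,4)] by blast
  moreover have "P4 \<Longrightarrow> P5"
    unfolding P4 P5_def using neg_box_mem_imp_cimp_mem[OF assms(3,4)] by blast
  moreover have "P5 \<Longrightarrow> P1"
    unfolding P5_def P1_def using cimp_mem_imp_maximal[OF assms(3,4)] by blast
  ultimately show ?thesis
    by blast
qed

end
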